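(* Let $p,q \geq 1$ with $p+q \geq 3$, and let $M_x, M_y, M_z$ be three Minkowski patches in $\mathrm{Ein}^{p,q}$. If $M_x \cap M_z = M_y \cap M_z$, then $M_x = M_y$.
   Context: Let $\mathbb{R}^{p+1,q+1}$ be $\mathbb{R}^{p+q+2}$ with a nondegenerate symmetric bilinear form $B$ of signature $(p+1,q+1)$, and $\mathrm{Ein}^{p,q} \subset \mathbb{R}P^{p+q+1}$ the set of isotropic lines, with the conformal structure induced by $B$. For an isotropic vector $v$ with $x=[v]$, the Minkowski patch with vertex $x$ is $M_x = \{[w] \in \mathrm{Ein}^{p,q} : B(v,w) \neq 0\}$; it is an open dense subset conformally equivalent to $\mathbb{R}^{p,q}$. *)

theory Defs
  imports Complex_Main
begin

text \<open>Vectors of R^(p+q+2) are modelled as functions nat => real vanishing at indices >= p+q+2.\<close>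

definition vecs :: "nat \<Rightarrow> nat \<Rightarrow> (nat \<Rightarrow> real) set" where
  "vecs p q = {v. \<forall>i\<ge>p+q+2. v i = 0}"

definition Bf :: "nat \<Rightarrow> nat \<Rightarrow> (nat \<Rightarrow> real) \<Rightarrow> (nat \<Rightarrow> real) \<Rightarrow> real" where
  "Bf p q v w = (\<Sum>i<p+1. v i * w i) - (\<Sum>i\<in>{p+1..<p+q+2}. v i * w i)"

definition line :: "(nat \<Rightarrow> real) \<Rightarrow> (nat \<Rightarrow> real) set" where
  "line v = {(\<lambda>i. c * v i) | c. True}"

definition Ein :: "nat \<Rightarrow> nat \<Rightarrow> (nat \<Rightarrow> real) set set" where
  "Ein p q = {line v | v. v \<in> vecs p q \<and> v \<noteq> (\<lambda>_. 0) \<and> Bf p q v v = 0}"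

definition Mink :: "nat \<Rightarrow> nat \<Rightarrow> (nat \<Rightarrow> real) set \<Rightarrow> (nat \<Rightarrow> real) set set" where
  "Mink p q x = {L \<in> Ein p q. \<exists>v w. v \<in> vecs p q \<and> w \<in> vecs p q \<and> v \<noteq> (\<lambda>_. 0) \<and> w \<noteq> (\<lambda>_. 0)
      \<and> x = line v \<and> L = line w \<and> Bf p q v w \<noteq> 0}"

end

theory Submission
  imports Defs "HOL-Library.Quadratic_Discriminant"
begin

text \<open>Write \<open>x = [a]\<close>, \<open>y = [b]\<close>, \<open>z = [c]\<close>. A null line \<open>[v]\<close> lies in \<open>M\<^sub>x\<close> iff \<open>B(a,v) \<noteq> 0\<close>, so the
  hypothesis says that \<open>a\<^sup>\<perp>\<close> and \<open>b\<^sup>\<perp>\<close> contain the same null vectors \<open>v\<close> with \<open>B(c,v) \<noteq> 0\<close>; it suffices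
  to show \<open>a\<^sup>\<perp> \<subseteq> b\<^sup>\<perp>\<close> or \<open>b\<^sup>\<perp> \<subseteq> a\<^sup>\<perp>\<close>, since by nondegeneracy either forces \<open>[a] = [b]\<close>.
  If \<open>B(a,c) \<noteq> 0\<close>, adding a multiple of \<open>a\<close> moves every null vector of \<open>a\<^sup>\<perp>\<close> into the patch of \<open>z\<close>,
  so \<open>b\<close> vanishes on the null vectors of \<open>a\<^sup>\<perp>\<close>. As \<open>a\<^sup>\<perp>\<close> contains vectors of both signs (\<open>p, q \<ge> 1\<close>),
  every vector of \<open>a\<^sup>\<perp>\<close> lies on a line meeting its null cone twice, hence \<open>b\<close> vanishes on \<open>a\<^sup>\<perp>\<close>.
  If \<open>B(a,c) = B(b,c) = 0\<close>, the null vector \<open>2B(c,u)u - B(u,u)c\<close> shows that the hypothesis holds for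
  all vectors \<open>u\<close> with \<open>B(c,u) \<noteq> 0\<close>; as \<open>B(c,\<cdot>) \<noteq> 0\<close> defines a dense subset of \<open>a\<^sup>\<perp>\<close> unless
  \<open>a\<^sup>\<perp> \<subseteq> c\<^sup>\<perp>\<close>, we get \<open>a\<^sup>\<perp> \<subseteq> b\<^sup>\<perp>\<close>, or symmetrically \<open>b\<^sup>\<perp> \<subseteq> a\<^sup>\<perp>\<close>, or \<open>[a] = [c] = [b]\<close>.\<close>

lemma Bf_sym: "Bf p q v w = Bf p q w v"
  unfolding Bf_def by (simp add: mult.commute)

lemma Bf_add_left [simp]: "Bf p q (\<lambda>i. u i + v i) w = Bf p q u w + Bf p q v w"
  unfolding Bf_def by (simp add: sum.distrib algebra_simps)

lemma Bf_diff_left [simp]: "Bf p q (\<lambda>i. u i - v i) w = Bf p q u w - Bf p q v w"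
  unfolding Bf_def by (simp add: sum_subtractf algebra_simps)

lemma Bf_scale_left [simp]: "Bf p q (\<lambda>i. k * u i) w = k * Bf p q u w"
  unfolding Bf_def by (simp add: sum_distrib_left algebra_simps)

lemma Bf_add_right [simp]: "Bf p q w (\<lambda>i. u i + v i) = Bf p q w u + Bf p q w v"
  by (metis Bf_sym Bf_add_left)

lemma Bf_diff_right [simp]: "Bf p q w (\<lambda>i. u i - v i) = Bf p q w u - Bf p q w v"
  by (metis Bf_sym Bf_diff_left)

lemma Bf_scale_right [simp]: "Bf p q w (\<lambda>i. k * u i) = k * Bf p q w u"
  by (metis Bf_sym Bf_scale_left)

lemma Bf_zero_right [simp]: "Bf p q v (\<lambda>_. 0) = 0"
  unfolding Bf_def by simp

lemma vecs_add [intro]: "u \<in> vecs p q \<Longrightarrow> v \<in> vecs p q \<Longrightarrow> (\<lambda>i. u i + v i) \<in> vecs p q"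
  unfolding vecs_def by auto

lemma vecs_diff [intro]: "u \<in> vecs p q \<Longrightarrow> v \<in> vecs p q \<Longrightarrow> (\<lambda>i. u i - v i) \<in> vecs p q"
  unfolding vecs_def by auto

lemma vecs_scale [intro]: "u \<in> vecs p q \<Longrightarrow> (\<lambda>i. k * u i) \<in> vecs p q"
  unfolding vecs_def by auto

definition unit_vec :: "nat \<Rightarrow> nat \<Rightarrow> real" where
  "unit_vec i = (\<lambda>j. if j = i then 1 else 0)"

lemma unit_vec_in_vecs: "i < p+q+2 \<Longrightarrow> unit_vec i \<in> vecs p q"
  unfolding vecs_def unit_vec_def by auto

lemma sum_mult_unit_vec: "finite A \<Longrightarrow> (\<Sum>k\<in>A. v k * unit_vec i k) = (if i \<in> A then v i else 0)"
  unfolding unit_vec_def by (simp add: if_distrib sum.delta cong: if_cong)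

lemma Bf_unit_vec_right:
  "Bf p q v (unit_vec i) = (if i < p+1 then v i else if i < p+q+2 then - v i else 0)"
  unfolding Bf_def sum_mult_unit_vec[OF finite_lessThan] sum_mult_unit_vec[OF finite_atLeastLessThan]
  by simp

lemma Bf_unit_vec_unit_vec:
  "Bf p q (unit_vec i) (unit_vec j) =
    (if i \<noteq> j \<or> p+q+2 \<le> i then 0 else if i < p+1 then 1 else -1)"
  unfolding Bf_unit_vec_right by (simp add: unit_vec_def)

lemma Bf_nondegenerate:
  assumes "v \<in> vecs p q" and "\<And>w. w \<in> vecs p q \<Longrightarrow> Bf p q v w = 0"
  shows "v = (\<lambda>_. 0)"
proof
  fix i
  show "v i = 0"
  proof (cases "i < p+q+2")
    case True
    then have "Bf p q v (unit_vec i) = 0" using assms(2) unit_vec_in_vecs by blast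
    with True show ?thesis by (simp add: Bf_unit_vec_right split: if_splits)
  next
    case False
    with assms(1) show ?thesis unfolding vecs_def by auto
  qed
qed

definition perp :: "nat \<Rightarrow> nat \<Rightarrow> (nat \<Rightarrow> real) \<Rightarrow> (nat \<Rightarrow> real) set" where
  "perp p q a = {w \<in> vecs p q. Bf p q a w = 0}"

lemma proportional_if_perp_subset:
  assumes a: "a \<in> vecs p q" "a \<noteq> (\<lambda>_. 0)" and b: "b \<in> vecs p q"
    and sub: "perp p q a \<subseteq> perp p q b"
  shows "\<exists>k. b = (\<lambda>i. k * a i)"
proof -
  obtain w0 where w0: "w0 \<in> vecs p q" "Bf p q a w0 \<noteq> 0"
    using Bf_nondegenerate[OF a(1)] a(2) by blast
  define w1 where "w1 = (\<lambda>i. (1 / Bf p q a w0) * w0 i)"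
  have w1: "w1 \<in> vecs p q" "Bf p q a w1 = 1"
    using w0 unfolding w1_def by (auto simp only: vecs_scale Bf_scale_right) simp
  define k where "k = Bf p q b w1"
  have "(\<lambda>i. b i - k * a i) = (\<lambda>_. 0)"
  proof (rule Bf_nondegenerate)
    show "(\<lambda>i. b i - k * a i) \<in> vecs p q" using a b by (intro vecs_diff vecs_scale)
  next
    fix w assume w: "w \<in> vecs p q"
    have "(\<lambda>i. w i - Bf p q a w * w1 i) \<in> perp p q a"
      using w w1 unfolding perp_def by auto
    then have "Bf p q b (\<lambda>i. w i - Bf p q a w * w1 i) = 0"
      using sub unfolding perp_def by blast
    then have "Bf p q b w - Bf p q a w * Bf p q b w1 = 0"
      by (simp only: Bf_diff_right Bf_scale_right)
    then show "Bf p q (\<lambda>i. b i - k * a i) w = 0"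
      unfolding k_def by (simp only: Bf_diff_left Bf_scale_left) (simp add: mult.commute)
  qed
  then have "b = (\<lambda>i. k * a i)"
    by (metis (no_types, lifting) eq_iff_diff_eq_0)
  then show ?thesis ..
qed

lemma mem_line_iff: "u \<in> line w \<longleftrightarrow> (\<exists>k. u = (\<lambda>i. k * w i))"
  unfolding line_def by blast

lemma mem_line_self: "u \<in> line u"
  unfolding mem_line_iff by (rule exI[of _ 1]) simp

lemma line_eq_if_proportional:
  assumes "b = (\<lambda>i. k * a i)" and "b \<noteq> (\<lambda>_. 0)"
  shows "line a = line b"
proof -
  have "k \<noteq> 0" using assms by auto
  then have "(\<lambda>i. c * a i) = (\<lambda>i. (c / k) * b i)" for c
    using assms(1) by auto
  moreover have "(\<lambda>i. c * b i) = (\<lambda>i. (c * k) * a i)" for c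
    using assms(1) by auto
  ultimately show ?thesis
    unfolding line_def by blast
qed

lemma line_eq_if_perp_subset:
  assumes "a \<in> vecs p q" "a \<noteq> (\<lambda>_. 0)" "b \<in> vecs p q" "b \<noteq> (\<lambda>_. 0)"
    and "perp p q a \<subseteq> perp p q b"
  shows "line a = line b"
  using proportional_if_perp_subset[OF assms(1-3,5)] line_eq_if_proportional assms(4) by blast

lemma affine_zero_at_two_points:
  fixes \<alpha> \<beta> t1 t2 :: real
  assumes "t1 \<noteq> t2" and "\<alpha> + t1 * \<beta> = 0" and "\<alpha> + t2 * \<beta> = 0"
  shows "\<alpha> = 0 \<and> \<beta> = 0"
proof -
  have "(t1 - t2) * \<beta> = (\<alpha> + t1 * \<beta>) - (\<alpha> + t2 * \<beta>)" by (simp add: algebra_simps)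
  then have "(t1 - t2) * \<beta> = 0" using assms(2,3) by simp
  with assms show ?thesis by simp
qed

lemma nontrivial_solution_linear_equation:
  fixes \<alpha> \<beta> :: real
  obtains s t where "s\<^sup>2 + t\<^sup>2 > 0" and "s * \<alpha> + t * \<beta> = 0"
proof (cases "\<alpha> = 0 \<and> \<beta> = 0")
  case True
  then show ?thesis using that[of 1 0] by simp
next
  case False
  then have "\<beta>\<^sup>2 + (- \<alpha>)\<^sup>2 > 0" by (auto simp: sum_power2_gt_zero_iff)
  then show ?thesis using that[of \<beta> "- \<alpha>"] by (simp add: mult.commute)
qed

text \<open>The plane spanned by two basis vectors of the same sign meets \<open>a\<^sup>\<perp>\<close> nontrivially.\<close>

lemma perp_contains_spacelike:
  assumes "p \<ge> 1"
  obtains g where "g \<in> perp p q a" and "Bf p q g g > 0"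
proof -
  obtain s t where st: "s\<^sup>2 + t\<^sup>2 > 0" "s * Bf p q a (unit_vec 0) + t * Bf p q a (unit_vec 1) = 0"
    by (rule nontrivial_solution_linear_equation)
  define g where "g = (\<lambda>k. s * unit_vec 0 k + t * unit_vec 1 k)"
  have "g \<in> perp p q a"
    using st(2) unit_vec_in_vecs[of 0 p q] unit_vec_in_vecs[of 1 p q] unfolding perp_def g_def by auto
  moreover have "Bf p q g g = s\<^sup>2 + t\<^sup>2"
    using assms unfolding g_def
    by (simp add: Bf_unit_vec_unit_vec power2_eq_square)
  ultimately show ?thesis using st(1) that by simp
qed

lemma perp_contains_timelike:
  assumes "q \<ge> 1"
  obtains g where "g \<in> perp p q a" and "Bf p q g g < 0"
proof -
  obtain s t where st: "s\<^sup>2 + t\<^sup>2 > 0"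
      "s * Bf p q a (unit_vec (p+1)) + t * Bf p q a (unit_vec (p+2)) = 0"
    by (rule nontrivial_solution_linear_equation)
  define g where "g = (\<lambda>k. s * unit_vec (p+1) k + t * unit_vec (p+2) k)"
  have "g \<in> perp p q a"
    using st(2) assms unit_vec_in_vecs[of "p+1" p q] unit_vec_in_vecs[of "p+2" p q]
    unfolding perp_def g_def by auto
  moreover have "Bf p q g g = - (s\<^sup>2 + t\<^sup>2)"
    using assms unfolding g_def
    by (simp add: Bf_unit_vec_unit_vec power2_eq_square)
  ultimately show ?thesis using st(1) that by simp
qed

lemma perp_subset_if_null_perp_subset:
  assumes "p \<ge> 1" "q \<ge> 1"
    and null: "\<And>v. v \<in> perp p q a \<Longrightarrow> Bf p q v v = 0 \<Longrightarrow> Bf p q b v = 0"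
  shows "perp p q a \<subseteq> perp p q b"
proof
  fix w assume w: "w \<in> perp p q a"
  have "Bf p q b w = 0"
  proof (cases "Bf p q w w = 0")
    case True
    with null w show ?thesis .
  next
    case False
    obtain g where g: "g \<in> perp p q a" "Bf p q g g * Bf p q w w < 0"
    proof (cases "Bf p q w w > 0")
      case True
      obtain g where "g \<in> perp p q a" "Bf p q g g < 0"
        using perp_contains_timelike[OF assms(2)] .
      with True that show ?thesis by (simp add: mult_neg_pos)
    next
      case False
      obtain g where "g \<in> perp p q a" "Bf p q g g > 0"
        using perp_contains_spacelike[OF assms(1)] .
      with False \<open>Bf p q w w \<noteq> 0\<close> that show ?thesis by (simp add: mult_pos_neg)
    qed
    have "Bf p q g g \<noteq> 0" using g(2) by auto
    moreover have "discrim (Bf p q g g) (2 * Bf p q w g) (Bf p q w w) > 0"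
      using g(2) unfolding discrim_def
      by (simp add: mult.assoc power_mult_distrib) (use zero_le_power2[of "Bf p q w g"] in linarith)
    ultimately obtain t1 t2 where t: "t1 \<noteq> t2"
        "Bf p q g g * t1\<^sup>2 + 2 * Bf p q w g * t1 + Bf p q w w = 0"
        "Bf p q g g * t2\<^sup>2 + 2 * Bf p q w g * t2 + Bf p q w w = 0"
      using discriminant_pos_ex by blast
    have "Bf p q b w + t * Bf p q b g = 0"
      if "Bf p q g g * t\<^sup>2 + 2 * Bf p q w g * t + Bf p q w w = 0" for t
    proof -
      have "(\<lambda>i. w i + t * g i) \<in> perp p q a"
        using w g(1) unfolding perp_def by auto
      moreover have "Bf p q (\<lambda>i. w i + t * g i) (\<lambda>i. w i + t * g i) = 0"
        using that by (simp add: Bf_sym[of p q g w] power2_eq_square algebra_simps)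
      ultimately show ?thesis using null by fastforce
    qed
    with t show ?thesis using affine_zero_at_two_points by blast
  qed
  with w show "w \<in> perp p q b" unfolding perp_def by blast
qed

text \<open>For \<open>x = [a]\<close>, \<open>y = [b]\<close>, \<open>z = [c]\<close> this is the condition \<open>M\<^sub>x \<inter> M\<^sub>z = M\<^sub>y \<inter> M\<^sub>z\<close>
  (see \<open>line_in_Mink_iff\<close>).\<close>

definition perps_agree_on_patch ::
    "nat \<Rightarrow> nat \<Rightarrow> (nat \<Rightarrow> real) \<Rightarrow> (nat \<Rightarrow> real) \<Rightarrow> (nat \<Rightarrow> real) \<Rightarrow> bool" where
  "perps_agree_on_patch p q c a b \<longleftrightarrow>
    (\<forall>v \<in> vecs p q. Bf p q v v = 0 \<longrightarrow> Bf p q c v \<noteq> 0 \<longrightarrow> (v \<in> perp p q a \<longleftrightarrow> v \<in> perp p q b))"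

lemma perps_agree_on_patch_commute:
  "perps_agree_on_patch p q c a b \<longleftrightarrow> perps_agree_on_patch p q c b a"
  unfolding perps_agree_on_patch_def by blast

lemma perp_subset_if_perps_agree_on_patch_transversal:
  assumes "p \<ge> 1" "q \<ge> 1"
    and a: "a \<in> vecs p q" "Bf p q a a = 0" and ac: "Bf p q a c \<noteq> 0"
    and agree: "perps_agree_on_patch p q c a b"
  shows "perp p q a \<subseteq> perp p q b"
proof (rule perp_subset_if_null_perp_subset[OF assms(1,2)])
  have ca: "Bf p q c a \<noteq> 0" using ac by (simp add: Bf_sym)
  have "a \<in> perp p q a" using a unfolding perp_def by blast
  with a ca agree have ba: "Bf p q b a = 0"
    unfolding perps_agree_on_patch_def perp_def by blast
  fix v assume v: "v \<in> perp p q a" "Bf p q v v = 0"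
  define s where "s = (1 - Bf p q c v) / Bf p q c a"
  define v' where "v' = (\<lambda>i. v i + s * a i)"
  have "v' \<in> perp p q a" using v(1) a unfolding perp_def v'_def by auto
  moreover have "Bf p q v' v' = 0"
    using v a unfolding perp_def v'_def by (simp add: Bf_sym[of p q v a])
  moreover have "Bf p q c v' = 1"
    using ca unfolding v'_def s_def by (simp only: Bf_add_right Bf_scale_right) simp
  ultimately have "v' \<in> perp p q b"
    using agree unfolding perps_agree_on_patch_def perp_def by auto
  with ba show "Bf p q b v = 0"
    unfolding perp_def v'_def by simp
qed

text \<open>The vector \<open>2B(c,u)u - B(u,u)c\<close> is null and has the pairings of \<open>u\<close> with \<open>a, b, c\<close>,
  multiplied by \<open>2B(c,u)\<close>.\<close>

lemma perps_agree_beyond_null_cone: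
  assumes c: "c \<in> vecs p q" "Bf p q c c = 0"
    and ac: "Bf p q a c = 0" and bc: "Bf p q b c = 0"
    and agree: "perps_agree_on_patch p q c a b"
    and u: "u \<in> vecs p q" "Bf p q c u \<noteq> 0"
  shows "u \<in> perp p q a \<longleftrightarrow> u \<in> perp p q b"
proof -
  define L where "L = Bf p q c u"
  define w where "w = (\<lambda>i. (2 * L) * u i - Bf p q u u * c i)"
  have "w \<in> vecs p q" using u c unfolding w_def by (intro vecs_diff vecs_scale)
  moreover have "Bf p q w w = 0"
    unfolding w_def L_def
    by (simp only: Bf_diff_left Bf_diff_right Bf_scale_left Bf_scale_right)
      (simp add: c(2) Bf_sym[of p q u c] algebra_simps)
  moreover have "Bf p q c w = 2 * L * L"
    unfolding w_def L_def using c(2) by simp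
  moreover have "Bf p q a w = 2 * L * Bf p q a u" "Bf p q b w = 2 * L * Bf p q b u"
    unfolding w_def using ac bc by simp_all
  moreover have "L \<noteq> 0" using u(2) unfolding L_def .
  ultimately show ?thesis
    using agree u(1) unfolding perps_agree_on_patch_def perp_def by auto
qed

lemma perp_subset_if_vanishes_off_hyperplane:
  assumes h: "h \<in> perp p q a" "Bf p q c h \<noteq> 0"
    and vanish: "\<And>u. u \<in> perp p q a \<Longrightarrow> Bf p q c u \<noteq> 0 \<Longrightarrow> Bf p q b u = 0"
  shows "perp p q a \<subseteq> perp p q b"
proof
  fix w assume w: "w \<in> perp p q a"
  define s0 where "s0 = - Bf p q c w / Bf p q c h"
  have line: "Bf p q b w + s * Bf p q b h = 0" if "s \<noteq> s0" for s
  proof -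
    have "(\<lambda>i. w i + s * h i) \<in> perp p q a"
      using w h(1) unfolding perp_def by auto
    moreover have "Bf p q c w + s * Bf p q c h \<noteq> 0"
    proof
      assume "Bf p q c w + s * Bf p q c h = 0"
      then have "s = s0" using h(2) unfolding s0_def by (simp add: field_simps)
      with that show False ..
    qed
    ultimately have "Bf p q b (\<lambda>i. w i + s * h i) = 0" by (intro vanish) simp_all
    then show ?thesis by simp
  qed
  have "Bf p q b w + (s0 + 1) * Bf p q b h = 0" "Bf p q b w + (s0 + 2) * Bf p q b h = 0"
    using line by simp_all
  then have "Bf p q b w = 0"
    using affine_zero_at_two_points[of "s0 + 1" "s0 + 2" "Bf p q b w" "Bf p q b h"] by simp
  with w show "w \<in> perp p q b" unfolding perp_def by blast
qed

lemma perp_subset_if_perps_agree_on_patch_orthogonal: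
  assumes c: "c \<in> vecs p q" "Bf p q c c = 0"
    and ac: "Bf p q a c = 0" and bc: "Bf p q b c = 0"
    and agree: "perps_agree_on_patch p q c a b"
    and h: "h \<in> perp p q a" "Bf p q c h \<noteq> 0"
  shows "perp p q a \<subseteq> perp p q b"
  using h
proof (rule perp_subset_if_vanishes_off_hyperplane)
  fix u assume u: "u \<in> perp p q a" "Bf p q c u \<noteq> 0"
  then have "u \<in> perp p q b"
    using perps_agree_beyond_null_cone[OF c ac bc agree] unfolding perp_def by blast
  then show "Bf p q b u = 0" unfolding perp_def by blast
qed

lemma line_eq_if_perps_agree_on_patch:
  assumes pq: "p \<ge> 1" "q \<ge> 1"
    and a: "a \<in> vecs p q" "a \<noteq> (\<lambda>_. 0)" "Bf p q a a = 0"
    and b: "b \<in> vecs p q" "b \<noteq> (\<lambda>_. 0)" "Bf p q b b = 0"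
    and c: "c \<in> vecs p q" "c \<noteq> (\<lambda>_. 0)" "Bf p q c c = 0"
    and agree: "perps_agree_on_patch p q c a b"
  shows "line a = line b"
proof -
  have agree': "perps_agree_on_patch p q c b a"
    using agree by (simp only: perps_agree_on_patch_commute)
  consider "perp p q a \<subseteq> perp p q b" | "perp p q b \<subseteq> perp p q a"
    | "perp p q a \<subseteq> perp p q c" "perp p q b \<subseteq> perp p q c"
  proof (cases "Bf p q a c = 0 \<and> Bf p q b c = 0")
    case True
    show thesis
    proof (cases "perp p q a \<subseteq> perp p q c \<and> perp p q b \<subseteq> perp p q c")
      case False
      then obtain h where "h \<in> perp p q a \<and> Bf p q c h \<noteq> 0 \<or> h \<in> perp p q b \<and> Bf p q c h \<noteq> 0"
        unfolding perp_def by auto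
      then show thesis
        using perp_subset_if_perps_agree_on_patch_orthogonal[OF c(1,3)] True agree agree' that(1,2)
        by blast
    qed (use that(3) in blast)
  next
    case False
    then show thesis
      using perp_subset_if_perps_agree_on_patch_transversal[OF pq] a b agree agree' that(1,2)
      by blast
  qed
  then show ?thesis
  proof cases
    case 1
    then show ?thesis using line_eq_if_perp_subset[OF a(1,2) b(1,2)] by simp
  next
    case 2
    then show ?thesis using line_eq_if_perp_subset[OF b(1,2) a(1,2)] by simp
  next
    case 3
    then show ?thesis
      using line_eq_if_perp_subset[OF a(1,2) c(1,2)] line_eq_if_perp_subset[OF b(1,2) c(1,2)]
      by simp
  qed
qed

lemma line_in_Mink_iff:
  assumes a: "a \<in> vecs p q" "a \<noteq> (\<lambda>_. 0)"
    and v: "v \<in> vecs p q" "v \<noteq> (\<lambda>_. 0)" "Bf p q v v = 0"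
  shows "line v \<in> Mink p q (line a) \<longleftrightarrow> Bf p q a v \<noteq> 0"
proof
  assume "line v \<in> Mink p q (line a)"
  then obtain a' v' where a'v': "line a = line a'" "line v = line v'" "Bf p q a' v' \<noteq> 0"
    unfolding Mink_def by blast
  have "a' \<in> line a" "v' \<in> line v"
    unfolding a'v'(1,2) by (rule mem_line_self)+
  then obtain k m where "a' = (\<lambda>i. k * a i)" "v' = (\<lambda>i. m * v i)"
    unfolding mem_line_iff by blast
  with a'v'(3) show "Bf p q a v \<noteq> 0" by simp
next
  assume "Bf p q a v \<noteq> 0"
  moreover have "line v \<in> Ein p q" unfolding Ein_def using v by blast
  ultimately show "line v \<in> Mink p q (line a)" unfolding Mink_def using a v by blast
qed

lemma Ein_E:
  assumes "x \<in> Ein p q"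
  obtains a where "x = line a" "a \<in> vecs p q" "a \<noteq> (\<lambda>_. 0)" "Bf p q a a = 0"
  using assms unfolding Ein_def by blast

theorem lemma2p3:
  fixes p q :: nat and x y z :: "(nat \<Rightarrow> real) set"
  assumes "p \<ge> 1" and "q \<ge> 1" and "p + q \<ge> 3"
    and "x \<in> Ein p q" and "y \<in> Ein p q" and "z \<in> Ein p q"
    and "Mink p q x \<inter> Mink p q z = Mink p q y \<inter> Mink p q z"
  shows "Mink p q x = Mink p q y"
proof -
  obtain a where a: "x = line a" "a \<in> vecs p q" "a \<noteq> (\<lambda>_. 0)" "Bf p q a a = 0"
    using assms(4) by (rule Ein_E)
  obtain b where b: "y = line b" "b \<in> vecs p q" "b \<noteq> (\<lambda>_. 0)" "Bf p q b b = 0"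
    using assms(5) by (rule Ein_E)
  obtain c where c: "z = line c" "c \<in> vecs p q" "c \<noteq> (\<lambda>_. 0)" "Bf p q c c = 0"
    using assms(6) by (rule Ein_E)
  have "perps_agree_on_patch p q c a b"
    unfolding perps_agree_on_patch_def
  proof (intro ballI impI)
    fix v assume v: "v \<in> vecs p q" "Bf p q v v = 0" "Bf p q c v \<noteq> 0"
    then have "v \<noteq> (\<lambda>_. 0)" by auto
    note in_patch = line_in_Mink_iff[OF _ _ v(1) this v(2)]
    have "line v \<in> Mink p q z" using in_patch[OF c(2,3)] c(1) v(3) by simp
    then have "line v \<in> Mink p q x \<longleftrightarrow> line v \<in> Mink p q y"
      using assms(7) unfolding set_eq_iff Int_iff by blast
    then show "v \<in> perp p q a \<longleftrightarrow> v \<in> perp p q b"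
      using in_patch[OF a(2,3)] in_patch[OF b(2,3)] a(1) b(1) v(1) unfolding perp_def by simp
  qed
  then have "line a = line b"
    by (rule line_eq_if_perps_agree_on_patch[OF assms(1,2) a(2-4) b(2-4) c(2-4)])
  then show ?thesis using a(1) b(1) by simp
qed

end
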